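(* In the dual access model, there exists an algorithm which, on input a threshold $n\in\mathbb{N}$, $n\ge1$, and a parameter $\varepsilon>0$, and given dual access to a distribution $D$ over an arbitrary (finite) set satisfying $\min_{x\in\mathrm{supp}(D)}D(x)\ge\frac1n$, outputs with probability at least $2/3$ an estimate $\hat k$ with $|\hat k-|\mathrm{supp}(D)||\le\varepsilon n$, and has query complexity $O(1/\varepsilon^2)$.
   Context: $\mathrm{supp}(D)=\{x: D(x)>0\}$. In the dual access model, an algorithm accesses $D$ via a sampling oracle $\mathsf{SAMP}_D$ (returns $x$ with probability $D(x)$, independently of all previous calls) and an evaluation oracle $\mathsf{EVAL}_D$ (on query $x$ returns $D(x)$); each call counts as one query. *)

theory Defs
  imports "HOL-Probability.Probability"
begin

text \<open>The (finite) domain of the distribution is identified with a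
finite subset of the naturals; a distribution is a nat pmf with finite support.
An algorithm is a (well-founded, possibly infinitely branching) interaction tree:
it may call the sampling oracle SAMP (continuation receives the sample), the
evaluation oracle EVAL on any point x (continuation receives D(x)), flip a fair
internal coin (free of charge), or return an output.\<close>

datatype 'r dual_alg =
    Ret 'r
  | Samp "nat \<Rightarrow> 'r dual_alg"
  | Eval nat "real \<Rightarrow> 'r dual_alg"
  | Coin "bool \<Rightarrow> 'r dual_alg"

primrec exec :: "nat pmf \<Rightarrow> 'r dual_alg \<Rightarrow> ('r \<times> nat) pmf" where
  "exec D (Ret r) = return_pmf (r, 0)"
| "exec D (Samp f) =
     bind_pmf D (\<lambda>x. map_pmf (\<lambda>(r, q). (r, Suc q)) (exec D (f x)))"
| "exec D (Eval x g) = map_pmf (\<lambda>(r, q). (r, Suc q)) (exec D (g (pmf D x)))"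
| "exec D (Coin h) = bind_pmf (bernoulli_pmf (1/2)) (\<lambda>b. exec D (h b))"

end

theory Submission
  imports Defs
begin

text \<open>For \<open>x\<close> drawn from \<open>D\<close>, the value \<open>1 / D(x)\<close> (one SAMP and one EVAL query) is an
unbiased estimator of \<open>|supp(D)|\<close>. When every point of the support has mass at least \<open>1/n\<close>,
this estimator has second moment \<open>\<Sum>\<^sub>x 1/D(x) \<le> n |supp(D)| \<le> n\<^sup>2\<close>. Averaging
\<open>m = \<lceil>3/\<epsilon>\<^sup>2\<rceil>\<close> independent copies divides the variance by \<open>m\<close>, and Chebyshev's inequality
bounds the probability of a deviation larger than \<open>\<epsilon>n\<close> by \<open>1/(m\<epsilon>\<^sup>2) \<le> 1/3\<close>.
For \<open>\<epsilon> \<ge> 1\<close> no query is needed: \<open>0\<close> is already within \<open>\<epsilon>n\<close> of \<open>|supp(D)| \<le> n\<close>.\<close>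

primrec iid_sum :: "'a pmf \<Rightarrow> ('a \<Rightarrow> real) \<Rightarrow> nat \<Rightarrow> real pmf" where
  "iid_sum M f 0 = return_pmf 0"
| "iid_sum M f (Suc m) = bind_pmf M (\<lambda>x. map_pmf (\<lambda>s. f x + s) (iid_sum M f m))"

lemma finite_set_iid_sum: "finite (set_pmf M) \<Longrightarrow> finite (set_pmf (iid_sum M f m))"
  by (induction m) auto

lemma integral_bind_pmf_finite:
  fixes f :: "'b \<Rightarrow> real"
  assumes M: "finite (set_pmf M)" and N: "\<And>x. x \<in> set_pmf M \<Longrightarrow> finite (set_pmf (N x))"
  shows "(\<integral>y. f y \<partial>bind_pmf M N) = (\<integral>x. (\<integral>y. f y \<partial>N x) \<partial>M)"
proof -
  define U where "U = (\<Union>x\<in>set_pmf M. set_pmf (N x))"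
  have U: "finite U" using M N by (auto simp: U_def)
  have "(\<integral>y. f y \<partial>bind_pmf M N) = (\<Sum>y\<in>U. f y * (\<Sum>x\<in>set_pmf M. pmf (N x) y * pmf M x))"
    by (subst integral_measure_pmf_real[OF U])
       (auto simp: U_def pmf_bind integral_measure_pmf_real[OF M])
  also have "\<dots> = (\<Sum>x\<in>set_pmf M. (\<Sum>y\<in>U. f y * pmf (N x) y) * pmf M x)"
    by (simp add: sum_distrib_left sum_distrib_right mult_ac sum.swap[of _ U])
  also have "\<dots> = (\<Sum>x\<in>set_pmf M. (\<integral>y. f y \<partial>N x) * pmf M x)"
    by (intro sum.cong refl arg_cong2[where f="(*)"] integral_measure_pmf_real[symmetric])
       (use M N in \<open>auto simp: U_def\<close>)
  also have "\<dots> = (\<integral>x. (\<integral>y. f y \<partial>N x) \<partial>M)"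
    by (rule integral_measure_pmf_real[symmetric]) (auto simp: M)
  finally show ?thesis .
qed

lemma expectation_iid_sum:
  assumes "finite (set_pmf M)"
  shows "measure_pmf.expectation (iid_sum M f m) (\<lambda>s. s) = real m * measure_pmf.expectation M f"
proof (induction m)
  case (Suc m)
  then show ?case
    by (simp add: integral_bind_pmf_finite finite_set_iid_sum assms
        integrable_measure_pmf_finite algebra_simps)
qed simp

lemma variance_iid_sum:
  assumes M: "finite (set_pmf M)"
  shows "measure_pmf.variance (iid_sum M f m) (\<lambda>s. s) = real m * measure_pmf.variance M f"
proof -
  define \<mu> where "\<mu> = measure_pmf.expectation M f"
  define V where "V = measure_pmf.variance M f"
  have "(\<integral>s. (s - real m * \<mu>)\<^sup>2 \<partial>iid_sum M f m) = real m * V"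
  proof (induction m)
    case (Suc m)
    let ?S = "iid_sum M f m"
    have S: "finite (set_pmf ?S)" using M by (rule finite_set_iid_sum)
    have centred: "(\<integral>s. s \<partial>?S) = real m * \<mu>"
      unfolding \<mu>_def by (rule expectation_iid_sum[OF M])
    have inner: "(\<integral>s. (f x + s - real (Suc m) * \<mu>)\<^sup>2 \<partial>?S) = (f x - \<mu>)\<^sup>2 + real m * V" for x
    proof -
      have "(f x + s - real (Suc m) * \<mu>)\<^sup>2
          = (f x - \<mu>)\<^sup>2 + 2 * (f x - \<mu>) * (s - real m * \<mu>) + (s - real m * \<mu>)\<^sup>2" for s
        by (simp add: power2_eq_square algebra_simps)
      then have "(\<integral>s. (f x + s - real (Suc m) * \<mu>)\<^sup>2 \<partial>?S)
          = (f x - \<mu>)\<^sup>2 + 2 * (f x - \<mu>) * ((\<integral>s. s \<partial>?S) - real m * \<mu>) + real m * V"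
        by (simp add: integrable_measure_pmf_finite S Suc)
      also have "\<dots> = (f x - \<mu>)\<^sup>2 + real m * V"
        \<comment> \<open>the cross term vanishes because the partial sum is centred at \<open>m\<mu>\<close>\<close>
        by (simp add: centred)
      finally show ?thesis .
    qed
    have "(\<integral>s. (s - real (Suc m) * \<mu>)\<^sup>2 \<partial>iid_sum M f (Suc m))
        = (\<integral>x. (f x - \<mu>)\<^sup>2 + real m * V \<partial>M)"
      by (simp add: integral_bind_pmf_finite M S inner del: of_nat_Suc)
    also have "\<dots> = real (Suc m) * V"
      by (simp add: integrable_measure_pmf_finite M V_def \<mu>_def algebra_simps)
    finally show ?case .
  qed simp
  then show ?thesis unfolding expectation_iid_sum[OF M] \<mu>_def V_def .
qed

lemma measure_pmf_Chebyshev_compl: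
  fixes X :: "real pmf"
  assumes "finite (set_pmf X)" and "a > 0"
  shows "measure X {s. \<bar>s - measure_pmf.expectation X (\<lambda>s. s)\<bar> \<le> a}
           \<ge> 1 - measure_pmf.variance X (\<lambda>s. s) / a\<^sup>2"
proof -
  let ?\<mu> = "measure_pmf.expectation X (\<lambda>s. s)"
  have "measure X {s. a \<le> \<bar>s - ?\<mu>\<bar>} \<le> measure_pmf.variance X (\<lambda>s. s) / a\<^sup>2"
    using measure_pmf.Chebyshev_inequality[of "\<lambda>s. s" X a] assms
    by (simp add: integrable_measure_pmf_finite)
  moreover have "measure X {s. a < \<bar>s - ?\<mu>\<bar>} \<le> measure X {s. a \<le> \<bar>s - ?\<mu>\<bar>}"
    by (intro measure_pmf.finite_measure_mono) auto
  moreover have "measure X {s. a < \<bar>s - ?\<mu>\<bar>} = 1 - measure X {s. \<bar>s - ?\<mu>\<bar> \<le> a}"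
    using measure_pmf.prob_compl[of "{s. \<bar>s - ?\<mu>\<bar> \<le> a}" X]
    by (simp add: Compl_eq_Diff_UNIV[symmetric] Collect_neg_eq[symmetric] not_le)
  ultimately show ?thesis by simp
qed

lemma iid_mean_concentration:
  assumes M: "finite (set_pmf M)" and "m > 0" and "\<delta> > 0"
  shows "measure (iid_sum M f m) {s. \<bar>s / real m - measure_pmf.expectation M f\<bar> \<le> \<delta>}
           \<ge> 1 - measure_pmf.variance M f / (real m * \<delta>\<^sup>2)"
proof -
  have "{s. \<bar>s / real m - measure_pmf.expectation M f\<bar> \<le> \<delta>}
      = {s. \<bar>s - measure_pmf.expectation (iid_sum M f m) (\<lambda>s. s)\<bar> \<le> real m * \<delta>}"
    using \<open>m > 0\<close> by (auto simp: expectation_iid_sum M abs_le_iff field_simps)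
  moreover have "real m * measure_pmf.variance M f / (real m * \<delta>)\<^sup>2
      = measure_pmf.variance M f / (real m * \<delta>\<^sup>2)"
    using \<open>m > 0\<close> by (simp add: power2_eq_square)
  ultimately show ?thesis
    using measure_pmf_Chebyshev_compl[OF finite_set_iid_sum[OF M], of "real m * \<delta>" f m] assms
    by (simp add: variance_iid_sum)
qed

lemma expectation_inverse_pmf:
  assumes "finite (set_pmf D)"
  shows "measure_pmf.expectation D (\<lambda>x. 1 / pmf D x) = real (card (set_pmf D))"
proof -
  have "measure_pmf.expectation D (\<lambda>x. 1 / pmf D x) = (\<Sum>x\<in>set_pmf D. 1 / pmf D x * pmf D x)"
    by (rule integral_measure_pmf_real[OF assms]) simp
  also have "\<dots> = (\<Sum>x\<in>set_pmf D. 1)"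
    by (intro sum.cong refl) (simp add: set_pmf_iff)
  finally show ?thesis by simp
qed

lemma card_set_pmf_le:
  assumes "finite (set_pmf D)" and "n \<ge> 1" and "\<forall>x\<in>set_pmf D. pmf D x \<ge> 1 / real n"
  shows "real (card (set_pmf D)) \<le> real n"
proof -
  have "real (card (set_pmf D)) / real n = (\<Sum>x\<in>set_pmf D. 1 / real n)" by simp
  also have "\<dots> \<le> (\<Sum>x\<in>set_pmf D. pmf D x)" using assms(3) by (intro sum_mono) auto
  also have "\<dots> = 1" using assms(1) by (rule sum_pmf_eq_1) auto
  finally show ?thesis using assms(2) by (simp add: divide_le_eq)
qed

lemma variance_inverse_pmf_le:
  assumes fin: "finite (set_pmf D)" and "n \<ge> 1" and lb: "\<forall>x\<in>set_pmf D. pmf D x \<ge> 1 / real n"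
  shows "measure_pmf.variance D (\<lambda>x. 1 / pmf D x) \<le> (real n)\<^sup>2"
proof -
  have "measure_pmf.variance D (\<lambda>x. 1 / pmf D x) \<le> measure_pmf.expectation D (\<lambda>x. (1 / pmf D x)\<^sup>2)"
    by (simp add: measure_pmf.variance_eq integrable_measure_pmf_finite fin)
  also have "\<dots> = (\<Sum>x\<in>set_pmf D. 1 / pmf D x)"
    by (subst integral_measure_pmf_real[OF fin])
       (auto simp: power2_eq_square set_pmf_iff intro!: sum.cong)
  also have "\<dots> \<le> (\<Sum>x\<in>set_pmf D. real n)"
    using lb \<open>n \<ge> 1\<close> by (intro sum_mono) (auto simp: set_pmf_iff field_simps)
  also have "\<dots> \<le> (real n)\<^sup>2"
    using card_set_pmf_le[OF assms] by (simp add: power2_eq_square mult_right_mono)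
  finally show ?thesis .
qed

primrec inverse_prob_alg :: "nat \<Rightarrow> (real \<Rightarrow> 'r) \<Rightarrow> 'r dual_alg" where
  "inverse_prob_alg 0 k = Ret (k 0)"
| "inverse_prob_alg (Suc m) k = Samp (\<lambda>x. Eval x (\<lambda>p. inverse_prob_alg m (\<lambda>s. k (1 / p + s))))"

lemma exec_inverse_prob_alg:
  "exec D (inverse_prob_alg m k) = map_pmf (\<lambda>s. (k s, 2 * m)) (iid_sum D (\<lambda>x. 1 / pmf D x) m)"
  by (induction m arbitrary: k) (simp_all add: map_bind_pmf pmf.map_comp o_def add.assoc)

definition sample_count :: "real \<Rightarrow> nat" where
  "sample_count \<epsilon> = nat \<lceil>3 / \<epsilon>\<^sup>2\<rceil>"

definition support_size_alg :: "real \<Rightarrow> real dual_alg" where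
  "support_size_alg \<epsilon> =
     (if \<epsilon> \<ge> 1 then Ret 0 else inverse_prob_alg (sample_count \<epsilon>) (\<lambda>s. s / sample_count \<epsilon>))"

lemma sample_count_bounds:
  assumes "0 < \<epsilon>" "\<epsilon> < 1"
  shows "real (sample_count \<epsilon>) * \<epsilon>\<^sup>2 \<ge> 3" and "real (sample_count \<epsilon>) \<le> 4 / \<epsilon>\<^sup>2"
proof -
  have pos: "\<epsilon>\<^sup>2 > 0" and "\<epsilon>\<^sup>2 < 1" using assms by (simp_all add: power_less_one_iff)
  then have "3 / \<epsilon>\<^sup>2 + 1 \<le> 4 / \<epsilon>\<^sup>2" by (simp add: divide_simps)
  have "3 / \<epsilon>\<^sup>2 \<le> real (sample_count \<epsilon>)" "real (sample_count \<epsilon>) \<le> 3 / \<epsilon>\<^sup>2 + 1"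
    using pos unfolding sample_count_def by (simp_all add: of_nat_nat le_of_int_ceiling)
  then show "real (sample_count \<epsilon>) * \<epsilon>\<^sup>2 \<ge> 3" "real (sample_count \<epsilon>) \<le> 4 / \<epsilon>\<^sup>2"
    using pos \<open>3 / \<epsilon>\<^sup>2 + 1 \<le> 4 / \<epsilon>\<^sup>2\<close> by (simp_all add: divide_le_eq)
qed

lemma support_size_alg_queries:
  assumes "\<epsilon> > 0" and "(k, q) \<in> set_pmf (exec D (support_size_alg \<epsilon>))"
  shows "real q \<le> 8 / \<epsilon>\<^sup>2"
  using assms sample_count_bounds[of \<epsilon>]
  by (auto simp: support_size_alg_def exec_inverse_prob_alg split: if_splits)

lemma support_size_alg_accurate:
  assumes "n \<ge> 1" and "\<epsilon> > 0" and fin: "finite (set_pmf D)"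
    and lb: "\<forall>x\<in>set_pmf D. pmf D x \<ge> 1 / real n"
  shows "measure_pmf.prob (exec D (support_size_alg \<epsilon>))
           {(k, q). \<bar>k - real (card (set_pmf D))\<bar> \<le> \<epsilon> * real n} \<ge> 2/3"
proof (cases "\<epsilon> \<ge> 1")
  case True
  have "real (card (set_pmf D)) \<le> \<epsilon> * real n"
    using card_set_pmf_le[OF fin \<open>n \<ge> 1\<close> lb] True mult_right_mono[OF True, of "real n"] by simp
  then show ?thesis using True by (simp add: support_size_alg_def)
next
  case False
  let ?m = "sample_count \<epsilon>" and ?Y = "\<lambda>x. 1 / pmf D x"
  have m: "real ?m * \<epsilon>\<^sup>2 \<ge> 3" using sample_count_bounds \<open>\<epsilon> > 0\<close> False by simp
  then have m_pos: "?m > 0" by (auto intro!: Nat.gr0I)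
  have "2/3 \<le> 1 - (real n)\<^sup>2 / (real ?m * (\<epsilon> * real n)\<^sup>2)"
    using m \<open>n \<ge> 1\<close> by (simp add: power_mult_distrib field_simps)
  also have "\<dots> \<le> 1 - measure_pmf.variance D ?Y / (real ?m * (\<epsilon> * real n)\<^sup>2)"
    using variance_inverse_pmf_le[OF fin \<open>n \<ge> 1\<close> lb] m_pos
    by (intro diff_left_mono divide_right_mono) auto
  also have "\<dots> \<le> measure (iid_sum D ?Y ?m) {s. \<bar>s / real ?m - measure_pmf.expectation D ?Y\<bar> \<le> \<epsilon> * real n}"
    using \<open>n \<ge> 1\<close> \<open>\<epsilon> > 0\<close> m_pos by (intro iid_mean_concentration fin) auto
  finally show ?thesis
    using False by (simp add: support_size_alg_def exec_inverse_prob_alg expectation_inverse_pmf fin)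
qed

theorem theorem14:
  "\<exists>C::real. C > 0 \<and> (\<exists>A :: nat \<Rightarrow> real \<Rightarrow> real dual_alg.
     \<forall>n::nat. \<forall>\<epsilon>::real. \<forall>D :: nat pmf.
       n \<ge> 1 \<longrightarrow> \<epsilon> > 0 \<longrightarrow> finite (set_pmf D) \<longrightarrow>
       (\<forall>x\<in>set_pmf D. pmf D x \<ge> 1 / real n) \<longrightarrow>
         measure_pmf.prob (exec D (A n \<epsilon>))
            {(k, q). \<bar>k - real (card (set_pmf D))\<bar> \<le> \<epsilon> * real n} \<ge> 2/3
       \<and> (\<forall>(k, q)\<in>set_pmf (exec D (A n \<epsilon>)). real q \<le> C / \<epsilon>\<^sup>2))"
  using support_size_alg_accurate support_size_alg_queries
  by (intro exI[of _ 8] conjI exI[of _ "\<lambda>_. support_size_alg"]) auto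

end
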